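(* There exists a Lipschitz function $f:[-1,1]\to\mathbb{R}$ (i.e. $|f(x)-f(y)|\le \kappa|x-y|$ for some constant $\kappa$ and all $x,y\in[-1,1]$) such that \[ \limsup_{n\to\infty}\frac{n}{\log n}\,\|B_n(f)-f\|_\infty>0, \] where $\|g\|_\infty=\sup_{x\in[-1,1]}|g(x)|$.
   Context: For $n\ge 1$ the equally spaced nodes are $x_{k,n}:=2k/n-1$, $k=0,\dots,n$. Berrut's barycentric interpolant of $f:[-1,1]\to\mathbb{R}$ is \[ B_n(f,x):=\frac{N_n(f,x)}{D_n(x)}\ \text{ for } x\notin\{x_{0,n},\dots,x_{n,n}\},\qquad B_n(f,x_{k,n}):=f(x_{k,n}), \] where $N_n(f,x)=\sum_{k=0}^n(-1)^k\frac{f(x_{k,n})}{x-x_{k,n}}$ and $D_n(x)=\sum_{k=0}^n(-1)^k\frac{1}{x-x_{k,n}}$. $B_n(f)$ denotes the function $x\mapsto B_n(f,x)$ on $[-1,1]$. *)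

theory Defs
  imports "HOL-Analysis.Analysis"
begin

definition node :: "nat \<Rightarrow> nat \<Rightarrow> real" where
  "node n k = 2 * real k / real n - 1"

definition berrut_num :: "nat \<Rightarrow> (real \<Rightarrow> real) \<Rightarrow> real \<Rightarrow> real" where
  "berrut_num n f x = (\<Sum>k=0..n. (-1)^k * f (node n k) / (x - node n k))"

definition berrut_den :: "nat \<Rightarrow> real \<Rightarrow> real" where
  "berrut_den n x = (\<Sum>k=0..n. (-1)^k / (x - node n k))"

definition berrut :: "nat \<Rightarrow> (real \<Rightarrow> real) \<Rightarrow> real \<Rightarrow> real" where
  "berrut n f x =
     (if \<exists>k\<le>n. x = node n k then f x
      else berrut_num n f x / berrut_den n x)"

definition sup_norm :: "(real \<Rightarrow> real) \<Rightarrow> real" where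
  "sup_norm g = (SUP x\<in>{-1..1}. \<bar>g x\<bar>)"

end

(*
  Bump m is a cosine wave of amplitude 2/(pi n), n = level m, supported between consecutive
  midpoints of the degree-n nodes; at the K - 1 nodes it covers (K = bump_K m) it takes the values
  (-1)^k 2/(pi n), in phase with Berrut's weights (-1)^k. At the probe point x just right of the bump,
  where f = sum of all bumps vanishes, the bump's contribution to the numerator N_n(f, x) is the
  harmonic-type sum (2/pi) sum 1/(2i+1) ~ (ln K)/pi, while every other bump vanishes near x and, by
  summation by parts, contributes O(4^m) independently of n. Since |D_n(x)| <= 2n at a midpoint,
  |B_n(f, x) - f(x)| >~ ln K / n, and the bumps are so steep (ln K ~ ln n >> 4^m) that
  n / ln n * |B_n(f) - f| stays bounded below along n = level m. The bumps have disjoint supports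
  accumulating at -1 and are 1-Lipschitz with zeros at their ends, so f is 1-Lipschitz.
*)
theory Submission
  imports Defs "HOL-Analysis.Harmonic_Numbers"
begin

section \<open>Alternating and harmonic sums\<close>

lemma alternating_sum_bounds:
  fixes a :: "nat \<Rightarrow> real"
  assumes "\<And>i. 0 \<le> a i" "\<And>i. a (Suc i) \<le> a i"
  shows "0 \<le> (\<Sum>i<m. (-1)^i * a i) \<and> (\<Sum>i<m. (-1)^i * a i) \<le> a 0"
  using assms
proof (induction m arbitrary: a)
  case 0
  then show ?case by simp
next
  case (Suc m)
  have IH: "0 \<le> (\<Sum>i<m. (-1)^i * a (Suc i)) \<and> (\<Sum>i<m. (-1)^i * a (Suc i)) \<le> a (Suc 0)"
    using Suc.IH[of "\<lambda>i. a (Suc i)"] Suc.prems by simp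
  have "(\<Sum>i<Suc m. (-1)^i * a i) = a 0 - (\<Sum>i<m. (-1)^i * a (Suc i))"
    by (subst sum.lessThan_Suc_shift) (simp add: sum_negf)
  then show ?case using IH Suc.prems(2)[of 0] by linarith
qed

lemma alternating_reciprocal_sum_bounds:
  fixes d h :: real
  assumes d: "0 < d" "d \<le> h" and L: "0 < L"
  shows "1 / (2 * d) \<le> (\<Sum>i<L. (-1)^i / (d + i * h))"
    and "(\<Sum>i<L. (-1)^i / (d + i * h)) \<le> 1 / d"
proof -
  define a where "a i = 1 / (d + Suc i * h)" for i
  have a_nonneg: "0 \<le> a i" for i
    using d by (simp add: a_def)
  have a_decr: "a (Suc i) \<le> a i" for i
    using d unfolding a_def
    by (intro divide_left_mono mult_pos_pos add_pos_nonneg) (auto simp: algebra_simps)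
  obtain p where p: "L = Suc p" using L gr0_implies_Suc by blast
  have "(\<Sum>i<L. (-1)^i / (d + i * h)) = 1 / d - (\<Sum>i<p. (-1)^i * a i)"
    unfolding p a_def by (subst sum.lessThan_Suc_shift) (simp add: sum_negf)
  moreover have "a 0 \<le> 1 / (2 * d)"
    using d unfolding a_def by (intro divide_left_mono) auto
  ultimately show "1 / (2 * d) \<le> (\<Sum>i<L. (-1)^i / (d + i * h))"
    and "(\<Sum>i<L. (-1)^i / (d + i * h)) \<le> 1 / d"
    using alternating_sum_bounds[of a p, OF a_nonneg a_decr] by auto
qed

lemma abs_alternating_sum_le_variation:
  fixes a :: "nat \<Rightarrow> real"
  shows "\<bar>\<Sum>k<Suc n. (-1)^k * a k\<bar> \<le> \<bar>a n\<bar> + (\<Sum>k<n. \<bar>a (Suc k) - a k\<bar>)"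
proof (induction n arbitrary: a rule: less_induct)
  case (less n)
  consider "n = 0" | "n = 1" | q where "n = Suc (Suc q)"
    by (metis One_nat_def not0_implies_Suc)
  then show ?case
  proof cases
    case 3
    have IH: "\<bar>\<Sum>k<Suc q. (-1)^k * a (Suc (Suc k))\<bar>
        \<le> \<bar>a n\<bar> + (\<Sum>k<q. \<bar>a (Suc (Suc (Suc k))) - a (Suc (Suc k))\<bar>)"
      using less.IH[of q "\<lambda>k. a (Suc (Suc k))"] 3 by simp
    have "(\<Sum>k<Suc n. (-1)^k * a k) = (a 0 - a 1) + (\<Sum>k<Suc q. (-1)^k * a (Suc (Suc k)))"
      using 3 by (simp only: sum.lessThan_Suc_shift) simp
    moreover have "(\<Sum>k<n. \<bar>a (Suc k) - a k\<bar>)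
        = \<bar>a 1 - a 0\<bar> + \<bar>a 2 - a 1\<bar> + (\<Sum>k<q. \<bar>a (Suc (Suc (Suc k))) - a (Suc (Suc k))\<bar>)"
      using 3 by (simp only: sum.lessThan_Suc_shift) (simp add: numeral_2_eq_2)
    ultimately show ?thesis using IH by linarith
  qed simp_all
qed

lemma ln_le_3_sum_odd_reciprocals:
  assumes "1 \<le> K"
  shows "ln K / 3 \<le> (\<Sum>i=1..K-1. 1 / (2 * real i + 1))"
proof -
  have "ln K = ln (real (K - 1) + 1)" using assms by (simp add: of_nat_diff)
  also have "\<dots> \<le> harm (K - 1)" by (rule ln_le_harm)
  also have "\<dots> = (\<Sum>i=1..K-1. 1 / real i)" by (simp add: harm_def inverse_eq_divide)
  finally have "ln K / 3 \<le> (\<Sum>i=1..K-1. 1 / real i) / 3" by simp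
  also have "\<dots> = (\<Sum>i=1..K-1. 1 / (3 * real i))" by (simp add: sum_divide_distrib mult.commute)
  also have "\<dots> \<le> (\<Sum>i=1..K-1. 1 / (2 * real i + 1))"
    by (intro sum_mono divide_left_mono) auto
  finally show ?thesis .
qed

section \<open>The Berrut denominator\<close>

lemma node_add: "0 < n \<Longrightarrow> node n (k + i) = node n k + i * (2 / n)"
  by (simp add: node_def field_simps)

lemma node_Suc: "0 < n \<Longrightarrow> node n (Suc k) = node n k + 2 / n"
  using node_add[of n k 1] by simp

lemma node_mono: "0 < n \<Longrightarrow> k \<le> k' \<Longrightarrow> node n k \<le> node n k'"
  by (simp add: node_def divide_right_mono)

lemma node_self: "0 < n \<Longrightarrow> node n n = 1"
  by (simp add: node_def)

lemma berrut_den_split: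
  assumes n: "0 < n" and j: "j < n"
  shows "berrut_den n x = (-1)^j * ((\<Sum>i<Suc j. (-1)^i / ((x - node n j) + i * (2 / n)))
                                   + (\<Sum>i<n - j. (-1)^i / ((node n (Suc j) - x) + i * (2 / n))))"
proof -
  have "{0..n} = {0..j} \<union> {Suc j..n}" using j by auto
  then have "berrut_den n x = (\<Sum>k=0..j. (-1)^k / (x - node n k)) + (\<Sum>k=Suc j..n. (-1)^k / (x - node n k))"
    unfolding berrut_den_def by (simp add: sum.union_disjoint)
  also have "(\<Sum>k=0..j. (-1)^k / (x - node n k)) = (\<Sum>i<Suc j. (-1)^(j - i) / (x - node n (j - i)))"
    by (rule sum.reindex_bij_witness[where i="\<lambda>i. j - i" and j="\<lambda>k. j - k"]) auto
  also have "\<dots> = (-1)^j * (\<Sum>i<Suc j. (-1)^i / ((x - node n j) + i * (2 / n)))"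
    unfolding sum_distrib_left
  proof (rule sum.cong[OF refl])
    fix i assume "i \<in> {..<Suc j}"
    then have "node n j = node n (j - i) + i * (2 / n)" and "(-1::real)^j = (-1)^(j - i) * (-1)^i"
      using node_add[OF n, of "j - i" i] by (simp_all flip: power_add)
    then show "(-1)^(j - i) / (x - node n (j - i)) = (-1)^j * ((-1)^i / ((x - node n j) + i * (2 / n)))"
      by (simp add: algebra_simps)
  qed
  also have "(\<Sum>k=Suc j..n. (-1)^k / (x - node n k)) = (\<Sum>i<n - j. (-1)^(Suc j + i) / (x - node n (Suc j + i)))"
    by (rule sum.reindex_bij_witness[where i="\<lambda>i. Suc j + i" and j="\<lambda>k. k - Suc j"]) auto
  also have "\<dots> = (-1)^j * (\<Sum>i<n - j. (-1)^i / ((node n (Suc j) - x) + i * (2 / n)))"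
    unfolding sum_distrib_left
  proof (rule sum.cong[OF refl])
    fix i
    have e: "(node n (Suc j) - x) + i * (2 / n) = - (x - node n (Suc j + i))"
      using node_add[OF n, of "Suc j" i] by simp
    show "(-1)^(Suc j + i) / (x - node n (Suc j + i)) = (-1)^j * ((-1)^i / ((node n (Suc j) - x) + i * (2 / n)))"
      unfolding e by (simp add: power_add minus_divide_right)
  qed
  finally show ?thesis by (simp add: distrib_left)
qed

lemma berrut_den_bounds:
  assumes n: "0 < n" and j: "j < n" and x: "node n j < x" "x < node n (Suc j)"
  shows "max (1 / (2 * (x - node n j))) (1 / (2 * (node n (Suc j) - x))) \<le> \<bar>berrut_den n x\<bar>"
    and "\<bar>berrut_den n x\<bar> \<le> 1 / (x - node n j) + 1 / (node n (Suc j) - x)"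
proof -
  define l r where "l = x - node n j" and "r = node n (Suc j) - x"
  define A where "A = (\<Sum>i<Suc j. (-1)^i / (l + i * (2 / n)))"
  define B where "B = (\<Sum>i<n - j. (-1)^i / (r + i * (2 / n)))"
  have lr: "0 < l" "0 < r" "l \<le> 2 / n" "r \<le> 2 / n"
    using x node_Suc[OF n, of j] by (auto simp: l_def r_def)
  note A_bounds = alternating_reciprocal_sum_bounds[of l "2 / n" "Suc j", folded A_def]
  note B_bounds = alternating_reciprocal_sum_bounds[of r "2 / n" "n - j", folded B_def]
  have "0 < 1 / (2 * l)" "0 < 1 / (2 * r)"
    using lr by auto
  moreover have "berrut_den n x = (-1)^j * (A + B)"
    unfolding A_def B_def l_def r_def by (rule berrut_den_split[OF n j])
  ultimately have "\<bar>berrut_den n x\<bar> = A + B"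
    using A_bounds B_bounds lr j by (simp add: abs_mult)
  then show "max (1 / (2 * l)) (1 / (2 * r)) \<le> \<bar>berrut_den n x\<bar>"
    and "\<bar>berrut_den n x\<bar> \<le> 1 / l + 1 / r"
    using A_bounds B_bounds lr j \<open>0 < 1 / (2 * l)\<close> \<open>0 < 1 / (2 * r)\<close> by auto
qed

lemma between_nodes:
  assumes n: "0 < n" and x: "x \<in> {-1..1}" and not_node: "\<forall>k\<le>n. x \<noteq> node n k"
  obtains j where "j < n" "node n j < x" "x < node n (Suc j)"
proof -
  define y where "y = (x + 1) * n / 2"
  define j where "j = nat \<lfloor>y\<rfloor>"
  have x1: "x < 1" using x not_node node_self[OF n] by force
  have "0 \<le> y" using x by (simp add: y_def)
  moreover have "y < n" using x1 n by (simp add: y_def field_simps)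
  ultimately have y: "0 \<le> y" "y < n" by blast+
  have "real j = of_int \<lfloor>y\<rfloor>"
    using y by (simp add: j_def)
  then have jy: "j \<le> y" "y < j + 1"
    using of_int_floor_le[of y] real_of_int_floor_add_one_gt[of y] by linarith+
  have "j < n" using jy y by linarith
  moreover have "y \<noteq> j"
    using not_node \<open>j < n\<close> n by (auto simp: y_def node_def field_simps)
  then have "node n j < x"
    using jy n by (simp add: y_def node_def field_simps)
  moreover have "x < node n (Suc j)"
    using jy n by (simp add: y_def node_def field_simps)
  ultimately show ?thesis using that by blast
qed

lemma berrut_at_midpoint:
  assumes n: "0 < n" and r: "r < n" and x: "x = -1 + (2 * r + 1) / n"
  shows "berrut n f x = berrut_num n f x / berrut_den n x"
    and "0 < \<bar>berrut_den n x\<bar>" "\<bar>berrut_den n x\<bar> \<le> 2 * real n"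
proof -
  have l: "x - node n r = 1 / n" and r': "node n (Suc r) - x = 1 / n"
    using n by (simp_all add: x node_def field_simps)
  moreover have "0 < 1 / real n"
    using n by simp
  ultimately have j: "node n r < x" "x < node n (Suc r)"
    by linarith+
  show "0 < \<bar>berrut_den n x\<bar>" "\<bar>berrut_den n x\<bar> \<le> 2 * real n"
    using berrut_den_bounds[OF n r j] n unfolding l r' by simp_all
  have "x \<noteq> node n k" for k
  proof
    assume "x = node n k"
    then have "2 * real r + 1 = 2 * real k" using n by (simp add: x node_def field_simps)
    then have "2 * r + 1 = 2 * k" by linarith
    then show False by presburger
  qed
  then show "berrut n f x = berrut_num n f x / berrut_den n x"
    by (simp add: berrut_def)
qed

section \<open>The Berrut numerator\<close>

lemma berrut_num_add:
  "berrut_num n (\<lambda>t. f t + g t) x = berrut_num n f x + berrut_num n g x"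
  by (simp add: berrut_num_def distrib_left add_divide_distrib sum.distrib)

lemma abs_berrut_num_le:
  assumes M: "\<And>t. \<bar>f t\<bar> \<le> M" and \<delta>: "0 < \<delta>" and far: "\<And>k. \<delta> \<le> \<bar>x - node n k\<bar>"
  shows "\<bar>berrut_num n f x\<bar> \<le> (n + 1) * M / \<delta>"
proof -
  have "0 \<le> M" using M[of 0] abs_ge_zero order_trans by blast
  have "\<bar>berrut_num n f x\<bar> \<le> (\<Sum>k=0..n. \<bar>f (node n k)\<bar> / \<bar>x - node n k\<bar>)"
    unfolding berrut_num_def by (rule order_trans[OF sum_abs]) (simp add: abs_mult abs_divide)
  also have "\<dots> \<le> (\<Sum>k=0..n. M / \<delta>)"
    using M far \<delta> \<open>0 \<le> M\<close> by (intro sum_mono frac_le) auto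
  finally show ?thesis by (simp add: add.commute)
qed

text \<open>A crude Lebesgue-constant bound; it only serves to make the supremum norm of the error finite.\<close>

lemma abs_berrut_le:
  assumes n: "0 < n" and M: "\<And>t. \<bar>f t\<bar> \<le> M" and x: "x \<in> {-1..1}"
  shows "\<bar>berrut n f x\<bar> \<le> 2 * (real n + 1) * M"
proof (cases "\<exists>k\<le>n. x = node n k")
  case True
  have "0 \<le> M" using M[of 0] abs_ge_zero order_trans by blast
  then have "M \<le> 2 * (real n + 1) * M"
    by (simp add: mult_le_cancel_right1)
  moreover have "berrut n f x = f x"
    using True by (simp add: berrut_def)
  ultimately show ?thesis
    using M[of x] by linarith
next
  case False
  then obtain j where j: "j < n" "node n j < x" "x < node n (Suc j)"
    using between_nodes[OF n x] by blast
  define \<delta> where "\<delta> = min (x - node n j) (node n (Suc j) - x)"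
  have \<delta>: "0 < \<delta>" using j by (simp add: \<delta>_def)
  have far: "\<delta> \<le> \<bar>x - node n k\<bar>" for k
  proof (cases "k \<le> j")
    case True
    then show ?thesis using node_mono[OF n True] j by (simp add: \<delta>_def)
  next
    case False
    then show ?thesis using node_mono[OF n, of "Suc j" k] j by (simp add: \<delta>_def)
  qed
  have "1 / (2 * \<delta>) \<le> max (1 / (2 * (x - node n j))) (1 / (2 * (node n (Suc j) - x)))"
    by (cases "x - node n j \<le> node n (Suc j) - x") (simp_all add: \<delta>_def min_def)
  then have D: "1 / (2 * \<delta>) \<le> \<bar>berrut_den n x\<bar>"
    using berrut_den_bounds(1)[OF n j] by linarith
  have "berrut n f x = berrut_num n f x / berrut_den n x"
    using False unfolding berrut_def by (rule if_not_P)
  then have "\<bar>berrut n f x\<bar> = \<bar>berrut_num n f x\<bar> / \<bar>berrut_den n x\<bar>"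
    by (simp add: abs_divide)
  also have "\<dots> \<le> ((real n + 1) * M / \<delta>) / (1 / (2 * \<delta>))"
  proof (rule frac_le)
    show "\<bar>berrut_num n f x\<bar> \<le> (real n + 1) * M / \<delta>"
      by (rule abs_berrut_num_le[where f = f, OF M \<delta> far])
  qed (use D \<delta> M[of 0] in auto)
  also have "\<dots> = 2 * (real n + 1) * M" using \<delta> by (simp add: field_simps)
  finally show ?thesis .
qed

lemma bdd_above_berrut_error:
  assumes "0 < n" and M: "\<And>t. \<bar>f t\<bar> \<le> M"
  shows "bdd_above ((\<lambda>t. \<bar>berrut n f t - f t\<bar>) ` {-1..1})"
proof (rule bdd_aboveI2)
  fix t :: real assume "t \<in> {-1..1}"
  then show "\<bar>berrut n f t - f t\<bar> \<le> 2 * (real n + 1) * M + M"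
    using abs_berrut_le[where f = f, OF \<open>0 < n\<close> M \<open>t \<in> {-1..1}\<close>] M[of t] by linarith
qed

lemma abs_quotient_le_of_vanishing:
  fixes R :: "real \<Rightarrow> real"
  assumes Lip: "\<And>s t. \<bar>R s - R t\<bar> \<le> \<bar>s - t\<bar>"
    and van: "\<And>t. \<bar>t - x\<bar> < d \<Longrightarrow> R t = 0" and d: "0 < d" and v: "\<bar>v - x\<bar> < d"
  shows "\<bar>R u / (x - u)\<bar> \<le> \<bar>u - v\<bar> / d"
proof (cases "\<bar>u - x\<bar> < d")
  case False
  have "\<bar>R u\<bar> \<le> \<bar>u - v\<bar>" using Lip[of u v] van[OF v] by simp
  then show ?thesis
    using False d by (simp add: abs_divide abs_minus_commute frac_le)
qed (simp add: van)

lemma vanishing_quotient_diff_le: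
  fixes R :: "real \<Rightarrow> real"
  assumes Lip: "\<And>s t. \<bar>R s - R t\<bar> \<le> \<bar>s - t\<bar>" and bnd: "\<And>t. \<bar>R t\<bar> \<le> 1"
    and van: "\<And>t. \<bar>t - x\<bar> < d \<Longrightarrow> R t = 0" and d: "0 < d"
  shows "\<bar>R s / (x - s) - R t / (x - t)\<bar> \<le> \<bar>s - t\<bar> * (1 / d + 1 / d^2)"
proof -
  have near: "\<bar>R u / (x - u)\<bar> \<le> \<bar>u - v\<bar> / d" if "\<bar>v - x\<bar> < d" for u v
    by (rule abs_quotient_le_of_vanishing[where R = R and x = x]) (fact Lip van d that)+
  have "0 \<le> \<bar>s - t\<bar> / d^2" using d by simp
  then have split: "\<bar>s - t\<bar> / d \<le> \<bar>s - t\<bar> * (1 / d + 1 / d^2)"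
    by (simp add: distrib_left)
  consider "\<bar>s - x\<bar> < d" | "\<bar>t - x\<bar> < d" | "d \<le> \<bar>x - s\<bar>" "d \<le> \<bar>x - t\<bar>" by linarith
  then show ?thesis
  proof cases
    case 1
    then show ?thesis using near[OF 1, of t] van[OF 1] split by (simp add: abs_minus_commute)
  next
    case 2
    then show ?thesis using near[OF 2, of s] van[OF 2] split by simp
  next
    case 3
    then have "x - s \<noteq> 0" "x - t \<noteq> 0" using d by auto
    then have "R s / (x - s) - R t / (x - t) = (R s - R t) / (x - s) + R t * (s - t) / ((x - s) * (x - t))"
      by (simp add: divide_simps) (simp add: algebra_simps)
    moreover have "\<bar>(R s - R t) / (x - s)\<bar> \<le> \<bar>s - t\<bar> / d"
      unfolding abs_divide using Lip[of s t] 3 d by (intro frac_le) auto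
    moreover have "\<bar>R t * (s - t) / ((x - s) * (x - t))\<bar> \<le> \<bar>s - t\<bar> / d^2"
      unfolding abs_divide abs_mult power2_eq_square
      using bnd[of t] 3 d by (intro frac_le mult_mono) (auto intro: mult_left_le_one_le)
    moreover have "\<bar>s - t\<bar> * (1 / d + 1 / d^2) = \<bar>s - t\<bar> / d + \<bar>s - t\<bar> / d^2"
      by (simp add: distrib_left)
    ultimately show ?thesis
      using abs_triangle_ineq[of "(R s - R t) / (x - s)" "R t * (s - t) / ((x - s) * (x - t))"]
      by linarith
  qed
qed

text \<open>Summation by parts: the alternating weights of the Berrut numerator see only the variation of
  t \<mapsto> R t / (x - t) over the nodes, which stays bounded as n grows.\<close>

lemma abs_berrut_num_vanishing_le:
  fixes R :: "real \<Rightarrow> real"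
  assumes n: "0 < n" and Lip: "\<And>s t. \<bar>R s - R t\<bar> \<le> \<bar>s - t\<bar>" and bnd: "\<And>t. \<bar>R t\<bar> \<le> 1"
    and van: "\<And>t. \<bar>t - x\<bar> < d \<Longrightarrow> R t = 0" and d: "0 < d" "d \<le> 1"
  shows "\<bar>berrut_num n R x\<bar> \<le> 5 / d^2"
proof -
  define a where "a k = R (node n k) / (x - node n k)" for k
  have "berrut_num n R x = (\<Sum>k<Suc n. (-1)^k * a k)"
    unfolding berrut_num_def a_def atLeast0AtMost lessThan_Suc_atMost by simp
  then have "\<bar>berrut_num n R x\<bar> \<le> \<bar>a n\<bar> + (\<Sum>k<n. \<bar>a (Suc k) - a k\<bar>)"
    using abs_alternating_sum_le_variation[of a n] by simp
  also have "\<dots> \<le> 1 / d + (\<Sum>k<n. (2 / n) * (1 / d + 1 / d^2))"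
  proof (rule add_mono)
    show "\<bar>a n\<bar> \<le> 1 / d"
    proof (cases "\<bar>node n n - x\<bar> < d")
      case False
      then show ?thesis
        unfolding a_def abs_divide using bnd[of "node n n"] d by (intro frac_le) auto
    qed (use van d in \<open>simp add: a_def\<close>)
    show "(\<Sum>k<n. \<bar>a (Suc k) - a k\<bar>) \<le> (\<Sum>k<n. (2 / n) * (1 / d + 1 / d^2))"
    proof (rule sum_mono)
      fix k
      have "\<bar>node n (Suc k) - node n k\<bar> = 2 / n"
        using node_Suc[OF n, of k] by simp
      then show "\<bar>a (Suc k) - a k\<bar> \<le> (2 / n) * (1 / d + 1 / d^2)"
        using vanishing_quotient_diff_le[where x = x, OF Lip bnd van d(1), of "node n (Suc k)" "node n k"]
        by (simp add: a_def)
    qed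
  qed
  also have "\<dots> = 1 / d + 2 * (1 / d + 1 / d^2)" using n by simp
  also have "\<dots> \<le> 5 / d^2"
    using d by (simp add: power2_eq_square divide_le_eq field_simps)
  finally show ?thesis .
qed

section \<open>The bumps\<close>

text \<open>With K = bump_K m and n = level m = 2^(m+1) (8K + 1), the probe point
  probe m = -1 + 2^-(m+1) is the midpoint of the degree-n nodes 4K and 4K + 1, and bump m runs from
  the midpoint of the nodes 3K, 3K + 1 to that of 4K - 1, 4K. The exponent bump_exp m makes ln K
  dominate both the O(4^m) contribution of the other bumps at the probe point and m itself.\<close>

definition bump_exp :: "nat \<Rightarrow> nat" where
  "bump_exp m = 200 * 4 ^ (m + 2)"

definition bump_K :: "nat \<Rightarrow> nat" where
  "bump_K m = 2 ^ bump_exp m"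

definition level :: "nat \<Rightarrow> nat" where
  "level m = 2 ^ (m + 1) * (8 * bump_K m + 1)"

definition probe :: "nat \<Rightarrow> real" where
  "probe m = -1 + 1 / 2 ^ (m + 1)"

definition bump_lo :: "nat \<Rightarrow> real" where
  "bump_lo m = -1 + (6 * real (bump_K m) + 1) / real (level m)"

definition bump_hi :: "nat \<Rightarrow> real" where
  "bump_hi m = -1 + (8 * real (bump_K m) - 1) / real (level m)"

definition wave :: "nat \<Rightarrow> real \<Rightarrow> real" where
  "wave m t = 2 / (pi * level m) * cos (pi * level m * (t + 1) / 2)"

lemma bump_K_ge_1: "1 \<le> bump_K m"
  by (simp add: bump_K_def)

lemma level_pos: "0 < level m"
  by (simp add: level_def)

lemma level_real: "real (level m) = 2 ^ (m + 1) * (8 * real (bump_K m) + 1)"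
  by (simp add: level_def algebra_simps)

lemma probe_midpoint: "probe m = -1 + (2 * real (4 * bump_K m) + 1) / real (level m)"
  by (simp add: probe_def level_real)

lemma probe_gt: "-1 < probe m"
  by (simp add: probe_def)

lemma probe_offset_le:
  assumes "m < m'"
  shows "2 * (probe m' + 1) \<le> probe m + 1"
proof -
  have "(1::real) / 2 ^ m' \<le> 1 / 2 ^ (m + 1)"
    using assms by (intro divide_left_mono power_increasing) auto
  then show ?thesis by (simp add: probe_def)
qed

lemma bump_offset_eq:
  "bump_lo m + 1 = (6 * real (bump_K m) + 1) / (8 * real (bump_K m) + 1) * (probe m + 1)"
  "bump_hi m + 1 = (8 * real (bump_K m) - 1) / (8 * real (bump_K m) + 1) * (probe m + 1)"
  by (simp_all add: bump_lo_def bump_hi_def probe_def level_real)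

lemma bump_lo_ge: "3 * (probe m + 1) \<le> 4 * (bump_lo m + 1)"
proof -
  have "3 / 4 \<le> (6 * real (bump_K m) + 1) / (8 * real (bump_K m) + 1)"
    by (simp add: le_divide_eq)
  then have "3 / 4 * (probe m + 1) \<le> bump_lo m + 1"
    unfolding bump_offset_eq using probe_gt[of m] by (intro mult_right_mono) auto
  then show ?thesis by simp
qed

lemma bump_hi_lt_probe: "bump_hi m < probe m"
proof -
  have "(8 * real (bump_K m) - 1) / (8 * real (bump_K m) + 1) < 1"
    by (simp add: divide_less_eq)
  then have "bump_hi m + 1 < 1 * (probe m + 1)"
    unfolding bump_offset_eq using probe_gt[of m] by (intro mult_strict_right_mono) auto
  then show ?thesis by simp
qed

lemma bump_intervals_ordered:
  assumes "m < m'"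
  shows "bump_hi m' < bump_lo m"
  using bump_hi_lt_probe[of m'] probe_offset_le[OF assms] bump_lo_ge[of m] probe_gt[of m]
  by (simp add: algebra_simps)

lemma bump_interval_unique:
  assumes "t \<in> {bump_lo i..bump_hi i}" "t \<in> {bump_lo i'..bump_hi i'}"
  shows "i = i'"
  using assms bump_intervals_ordered[of i i'] bump_intervals_ordered[of i' i]
  by (cases i i' rule: linorder_cases) auto

lemma dist_probe_bump:
  assumes "i \<noteq> m" and t: "t \<in> {bump_lo i..bump_hi i}"
  shows "(probe m + 1) / 2 \<le> \<bar>t - probe m\<bar>"
proof (cases "i < m")
  case True
  then show ?thesis
    using probe_offset_le[OF True] bump_lo_ge[of i] probe_gt[of m] t abs_ge_self[of "t - probe m"]
    by auto
next
  case False
  then have "m < i" using assms(1) by simp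
  then show ?thesis
    using probe_offset_le[of m i] bump_hi_lt_probe[of i] t abs_ge_minus_self[of "t - probe m"]
    by auto
qed

lemma abs_cos_diff_le:
  fixes a b :: real
  shows "\<bar>cos a - cos b\<bar> \<le> \<bar>a - b\<bar>"
proof -
  have "\<bar>cos a - cos b\<bar> = 2 * \<bar>sin ((a + b) / 2)\<bar> * \<bar>sin ((b - a) / 2)\<bar>"
    by (simp add: cos_diff_cos abs_mult)
  also have "\<dots> \<le> 2 * 1 * \<bar>(b - a) / 2\<bar>"
    by (intro mult_mono abs_sin_x_le_abs_x) auto
  finally show ?thesis by simp
qed

lemma wave_lipschitz: "\<bar>wave m s - wave m t\<bar> \<le> \<bar>s - t\<bar>"
proof -
  define c where "c = pi * level m / 2"
  have c: "0 < c" using level_pos[of m] by (simp add: c_def)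
  have "wave m s - wave m t = (cos (c * (s + 1)) - cos (c * (t + 1))) / c"
    unfolding wave_def c_def by (simp add: diff_divide_distrib mult_ac)
  then have "\<bar>wave m s - wave m t\<bar> = \<bar>cos (c * (s + 1)) - cos (c * (t + 1))\<bar> / c"
    using c by (simp add: abs_divide)
  also have "\<dots> \<le> \<bar>c * (s + 1) - c * (t + 1)\<bar> / c"
    using c by (intro divide_right_mono abs_cos_diff_le) auto
  also have "\<dots> = \<bar>s - t\<bar>"
    using c by (simp add: right_diff_distrib[symmetric] abs_mult)
  finally show ?thesis .
qed

lemma abs_wave_le_1: "\<bar>wave m t\<bar> \<le> 1"
proof -
  have "3 * 1 \<le> pi * level m"
    using pi_gt3 level_pos[of m] by (intro mult_mono) auto
  then have "2 / (pi * level m) * \<bar>cos (pi * level m * (t + 1) / 2)\<bar> \<le> 1 * 1"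
    by (intro mult_mono abs_cos_le_one) auto
  then show ?thesis by (simp add: wave_def abs_mult)
qed

lemma wave_eq_0:
  assumes "real (level m) * (t + 1) = 2 * real k + 1"
  shows "wave m t = 0"
proof -
  have "pi * level m * (t + 1) / 2 = real (2 * k + 1) * (pi / 2)"
    using assms by (simp add: algebra_simps)
  then have "cos (pi * level m * (t + 1) / 2) = 0"
    unfolding cos_zero_iff by (intro disjI1 exI[of _ "2 * k + 1"]) simp
  then show ?thesis by (simp add: wave_def)
qed

lemma wave_bump_lo: "wave m (bump_lo m) = 0"
  by (rule wave_eq_0[of _ _ "3 * bump_K m"]) (use level_pos[of m] in \<open>simp add: bump_lo_def\<close>)

lemma wave_bump_hi: "wave m (bump_hi m) = 0"
  by (rule wave_eq_0[of _ _ "4 * bump_K m - 1"])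
     (use level_pos[of m] bump_K_ge_1[of m] in \<open>simp add: bump_hi_def of_nat_diff\<close>)

lemma wave_node: "wave m (node (level m) k) = 2 / (pi * level m) * (-1) ^ k"
proof -
  have "pi * level m * (node (level m) k + 1) / 2 = k * pi"
    using level_pos[of m] by (simp add: node_def)
  then show ?thesis unfolding wave_def by (simp only: cos_npi)
qed

lemma abs_wave_le_dist_ends:
  assumes "t \<in> {bump_lo m..bump_hi m}"
  shows "\<bar>wave m t\<bar> \<le> t - bump_lo m" and "\<bar>wave m t\<bar> \<le> bump_hi m - t"
  using wave_lipschitz[of m t "bump_lo m"] wave_lipschitz[of m t "bump_hi m"] assms
  by (simp_all add: wave_bump_lo wave_bump_hi)

text \<open>At most one summand is present since the bump intervals are disjoint.\<close>

definition bumps :: "nat set \<Rightarrow> real \<Rightarrow> real" where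
  "bumps I t = (\<Sum>i \<in> {i \<in> I. t \<in> {bump_lo i..bump_hi i}}. wave i t)"

lemma bumps_eq_wave:
  assumes "i \<in> I" "t \<in> {bump_lo i..bump_hi i}"
  shows "bumps I t = wave i t"
proof -
  have "{i \<in> I. t \<in> {bump_lo i..bump_hi i}} = {i}"
    using assms bump_interval_unique[of t i] by blast
  then show ?thesis by (simp add: bumps_def)
qed

lemma bumps_eq_0:
  assumes "\<And>i. i \<in> I \<Longrightarrow> t \<notin> {bump_lo i..bump_hi i}"
  shows "bumps I t = 0"
  using assms unfolding bumps_def by (metis (mono_tags, lifting) mem_Collect_eq sum.neutral)

lemma abs_bumps_le_1: "\<bar>bumps I t\<bar> \<le> 1"
  using bumps_eq_wave[of _ I t] bumps_eq_0[of I t] abs_wave_le_1 by (metis abs_zero zero_le_one)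

lemma abs_bumps_le_dist_ends:
  assumes "i \<in> I" "t \<in> {bump_lo i..bump_hi i}"
  shows "\<bar>bumps I t\<bar> \<le> t - bump_lo i" and "\<bar>bumps I t\<bar> \<le> bump_hi i - t"
  using abs_wave_le_dist_ends[OF assms(2)] bumps_eq_wave[OF assms] by simp_all

lemma bumps_lipschitz_le:
  assumes st: "s \<le> t"
  shows "\<bar>bumps I s - bumps I t\<bar> \<le> t - s"
proof -
  consider
      (both) i i' where "i \<in> I" "s \<in> {bump_lo i..bump_hi i}" "i' \<in> I" "t \<in> {bump_lo i'..bump_hi i'}"
    | (left) i where "i \<in> I" "s \<in> {bump_lo i..bump_hi i}"
        "\<And>i'. i' \<in> I \<Longrightarrow> t \<notin> {bump_lo i'..bump_hi i'}"
    | (right) i' where "\<And>i. i \<in> I \<Longrightarrow> s \<notin> {bump_lo i..bump_hi i}"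
        "i' \<in> I" "t \<in> {bump_lo i'..bump_hi i'}"
    | (none) "\<And>i. i \<in> I \<Longrightarrow> s \<notin> {bump_lo i..bump_hi i}"
        "\<And>i'. i' \<in> I \<Longrightarrow> t \<notin> {bump_lo i'..bump_hi i'}"
    by blast
  then show ?thesis
  proof cases
    case both
    show ?thesis
    proof (cases "i = i'")
      case True
      then show ?thesis
        using both bumps_eq_wave wave_lipschitz[of i s t] st by simp
    next
      case False
      then have "bump_hi i < bump_lo i'"
        using both st bump_intervals_ordered[of i i'] bump_intervals_ordered[of i' i]
        by (cases i i' rule: linorder_cases) auto
      then show ?thesis
        using abs_bumps_le_dist_ends(2)[OF both(1,2)] abs_bumps_le_dist_ends(1)[OF both(3,4)] by linarith
    qed
  next
    case left
    then have "bump_hi i < t" using st by force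
    then show ?thesis
      using abs_bumps_le_dist_ends(2)[OF left(1,2)] bumps_eq_0[OF left(3)] by simp
  next
    case right
    then have "s < bump_lo i'" using st by force
    then show ?thesis
      using abs_bumps_le_dist_ends(1)[OF right(2,3)] bumps_eq_0[OF right(1)] by simp
  next
    case none
    then show ?thesis using bumps_eq_0[of I s] bumps_eq_0[of I t] st by simp
  qed
qed

lemma bumps_lipschitz: "\<bar>bumps I s - bumps I t\<bar> \<le> \<bar>s - t\<bar>"
  using bumps_lipschitz_le[of s t I] bumps_lipschitz_le[of t s I]
  by (cases "s \<le> t") (simp_all add: abs_minus_commute)

lemma bumps_split: "bumps UNIV t = bumps {m} t + bumps (- {m}) t"
proof (cases "\<exists>i. t \<in> {bump_lo i..bump_hi i}")
  case True
  then obtain i where i: "t \<in> {bump_lo i..bump_hi i}" by blast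
  have out: "t \<notin> {bump_lo i'..bump_hi i'}" if "i' \<noteq> i" for i'
    using bump_interval_unique[OF i] that by blast
  show ?thesis
  proof (cases "i = m")
    case True
    then show ?thesis
      using bumps_eq_wave[OF _ i, of UNIV] bumps_eq_wave[OF _ i, of "{m}"] bumps_eq_0[of "- {m}" t] out
      by simp
  next
    case False
    then show ?thesis
      using bumps_eq_wave[OF _ i, of UNIV] bumps_eq_wave[OF _ i, of "- {m}"] bumps_eq_0[of "{m}" t] out
      by auto
  qed
next
  case False
  then show ?thesis using bumps_eq_0 by simp
qed

lemma bumps_probe: "bumps UNIV (probe m) = 0"
proof (rule bumps_eq_0)
  fix i
  show "probe m \<notin> {bump_lo i..bump_hi i}"
  proof (cases "i = m")
    case False
    then show ?thesis
      using dist_probe_bump[of i m "probe m"] probe_gt[of m] by auto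
  qed (use bump_hi_lt_probe[of m] in auto)
qed

section \<open>The error at the probe points\<close>

lemma node_in_bump_iff:
  "node (level m) k \<in> {bump_lo m..bump_hi m} \<longleftrightarrow> 3 * bump_K m + 1 \<le> k \<and> k \<le> 4 * bump_K m - 1"
proof -
  define K where "K = bump_K m"
  have n: "0 < real (level m)" using level_pos[of m] by simp
  have K: "1 \<le> K" using bump_K_ge_1[of m] by (simp add: K_def)
  have "bump_lo m \<le> node (level m) k \<longleftrightarrow> 6 * real K + 1 \<le> 2 * real k"
    using n by (simp add: bump_lo_def node_def K_def divide_le_cancel)
  also have "\<dots> \<longleftrightarrow> 3 * K + 1 \<le> k" by linarith
  finally have lo: "bump_lo m \<le> node (level m) k \<longleftrightarrow> 3 * K + 1 \<le> k" .
  have "node (level m) k \<le> bump_hi m \<longleftrightarrow> 2 * real k \<le> 8 * real K - 1"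
    using n by (simp add: bump_hi_def node_def K_def divide_le_cancel)
  also have "\<dots> \<longleftrightarrow> k \<le> 4 * K - 1" using K by linarith
  finally show ?thesis using lo by (simp add: K_def)
qed

lemma berrut_summand_resonant_bump:
  fixes m k :: nat
  defines "K \<equiv> bump_K m" and "n \<equiv> level m"
  shows "(-1)^k * bumps {m} (node n k) / (probe m - node n k)
           = (if 3 * K + 1 \<le> k \<and> k \<le> 4 * K - 1 then (2 / pi) / (8 * real K + 1 - 2 * real k) else 0)"
proof (cases "3 * K + 1 \<le> k \<and> k \<le> 4 * K - 1")
  case True
  have n: "0 < real n" using level_pos[of m] by (simp add: n_def)
  have bump: "bumps {m} (node n k) = 2 / (pi * n) * (-1)^k"
    using True bumps_eq_wave[of m "{m}"] node_in_bump_iff[of m k] wave_node[of m k]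
    by (simp add: n_def K_def)
  have dist: "probe m - node n k = (8 * real K + 1 - 2 * real k) / n"
    using n by (simp add: probe_midpoint node_def n_def K_def field_simps)
  have sign: "(-1::real)^k * (-1)^k = 1"
    by (simp flip: power_add add: mult_2[symmetric])
  have "(-1)^k * bumps {m} (node n k) / (probe m - node n k)
      = ((-1)^k * (-1)^k) * (2 / (pi * n)) / ((8 * real K + 1 - 2 * real k) / n)"
    unfolding bump dist by (simp add: algebra_simps)
  also have "\<dots> = (2 / pi) / (8 * real K + 1 - 2 * real k)"
    unfolding sign using n by (simp add: field_simps)
  finally show ?thesis using True by simp
next
  case False
  have "bumps {m} (node n k) = 0"
    using False node_in_bump_iff[of m k] by (intro bumps_eq_0) (simp add: n_def K_def)
  then show ?thesis unfolding if_not_P[OF False] by simp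
qed

lemma berrut_num_resonant_bump:
  "berrut_num (level m) (bumps {m}) (probe m) = 2 / pi * (\<Sum>i=1..bump_K m - 1. 1 / (2 * real i + 1))"
proof -
  define n where "n = level m"
  define K where "K = bump_K m"
  define P where "P k \<longleftrightarrow> 3 * K + 1 \<le> k \<and> k \<le> 4 * K - 1" for k
  have "1 * (8 * K + 1) \<le> 2 ^ (m + 1) * (8 * K + 1)"
    by (intro mult_le_mono1) simp
  then have "4 * K - 1 \<le> n" by (simp add: n_def level_def K_def)
  then have support: "{k \<in> {0..n}. P k} = {3 * K + 1 .. 4 * K - 1}"
    by (auto simp: P_def)
  have "berrut_num n (bumps {m}) (probe m)
      = (\<Sum>k=0..n. if P k then (2 / pi) / (8 * real K + 1 - 2 * real k) else 0)"
    unfolding berrut_num_def n_def K_def P_def berrut_summand_resonant_bump ..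
  also have "\<dots> = (\<Sum>k\<in>{k \<in> {0..n}. P k}. (2 / pi) / (8 * real K + 1 - 2 * real k))"
    by (rule sum.inter_filter[symmetric]) simp
  also have "\<dots> = (\<Sum>i=1..K-1. (2 / pi) / (8 * real K + 1 - 2 * real (4 * K - i)))"
    unfolding support
    by (rule sum.reindex_bij_witness[where i="\<lambda>k. 4 * K - k" and j="\<lambda>i. 4 * K - i"]) auto
  also have "\<dots> = (\<Sum>i=1..K-1. (2 / pi) * (1 / (2 * real i + 1)))"
    by (rule sum.cong) (auto simp: of_nat_diff)
  finally show ?thesis by (simp add: n_def K_def sum_distrib_left)
qed

lemma abs_berrut_num_far_bumps:
  "\<bar>berrut_num (level m) (bumps (- {m})) (probe m)\<bar> \<le> 5 * 4 ^ (m + 2)"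
proof -
  define d where "d = (probe m + 1) / 2"
  have d: "d = 1 / 2 ^ (m + 2)" by (simp add: d_def probe_def power_add)
  have "0 < d" "d \<le> 1"
    unfolding d using one_le_power[of "2::real" "m + 2"] by auto
  moreover have "bumps (- {m}) t = 0" if "\<bar>t - probe m\<bar> < d" for t
    using that dist_probe_bump[of _ m t] by (intro bumps_eq_0) (force simp: d_def)
  ultimately have "\<bar>berrut_num (level m) (bumps (- {m})) (probe m)\<bar> \<le> 5 / d^2"
    by (intro abs_berrut_num_vanishing_le level_pos bumps_lipschitz abs_bumps_le_1)
  also have "5 / d^2 = 5 * 4 ^ (m + 2)"
    by (simp add: d power_one_over power2_eq_square power_mult_distrib[symmetric])
  finally show ?thesis .
qed

lemma berrut_num_probe_ge: "17 * 4 ^ (m + 2) \<le> berrut_num (level m) (bumps UNIV) (probe m)"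
proof -
  define T :: real where "T = 4 ^ (m + 2)"
  define S where "S = (\<Sum>i=1..bump_K m - 1. 1 / (2 * real i + 1))"
  have T: "1 \<le> T" unfolding T_def by (rule one_le_power) simp
  have "ln (bump_K m) = 200 * T * ln 2"
    by (simp add: bump_K_def bump_exp_def T_def ln_realpow)
  then have "400 * T / 9 \<le> ln (bump_K m) / 3"
    using ln2_ge_two_thirds T by simp
  then have S: "400 * T / 9 \<le> S"
    using ln_le_3_sum_odd_reciprocals[OF bump_K_ge_1[of m]] unfolding S_def by linarith
  have "1 / 2 \<le> 2 / pi"
    using pi_less_4 by (simp add: field_simps)
  then have "1 / 2 * S \<le> 2 / pi * S"
    using S T by (intro mult_right_mono) auto
  then have "200 * T / 9 \<le> berrut_num (level m) (bumps {m}) (probe m)"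
    using S by (simp add: berrut_num_resonant_bump S_def)
  moreover have "berrut_num (level m) (bumps UNIV) (probe m)
      = berrut_num (level m) (bumps {m}) (probe m) + berrut_num (level m) (bumps (- {m})) (probe m)"
    unfolding bumps_split[of _ m, abs_def] by (rule berrut_num_add)
  ultimately show ?thesis
    using abs_berrut_num_far_bumps[of m] T by (simp add: T_def)
qed

lemma ln_level_le: "ln (level m) \<le> 400 * 4 ^ (m + 2)"
proof -
  define E where "E = bump_exp m"
  have "m < 2 ^ m" by (rule less_exp)
  also have "(2::nat) ^ m \<le> 4 ^ m" by (rule power_mono) auto
  finally have "m + 5 \<le> (4::nat) ^ (m + 2)" by simp
  then have m: "real m + 5 \<le> 4 ^ (m + 2)"
    using of_nat_le_iff[THEN iffD2] by fastforce
  have "level m \<le> 2 ^ (m + 1) * (16 * 2 ^ E)"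
    unfolding level_def bump_K_def E_def by (intro mult_le_mono2) simp
  also have "\<dots> = 2 ^ (m + 5 + E)"
    by (simp add: power_add)
  finally have "real (level m) \<le> 2 ^ (m + 5 + E)"
    by (metis of_nat_le_iff of_nat_numeral of_nat_power)
  then have "ln (level m) \<le> ln (2 ^ (m + 5 + E))"
    using level_pos[of m] by simp
  also have "\<dots> = real (m + 5 + E) * ln 2"
    by (rule ln_realpow)
  also have "\<dots> \<le> real (m + 5 + E) * 1"
    using ln_2_less_1 by (intro mult_left_mono) auto
  also have "\<dots> \<le> 400 * 4 ^ (m + 2)"
    using m unfolding E_def bump_exp_def by simp
  finally show ?thesis .
qed

lemma probe_mem: "probe m \<in> {-1..1}"
proof -
  have "0 \<le> (1::real) / 2 ^ (m + 1)" "(1::real) / 2 ^ (m + 1) \<le> 1"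
    using one_le_power[of "2::real" "m + 1"] by simp_all
  then show ?thesis
    unfolding probe_def atLeastAtMost_iff by linarith
qed

lemma sup_norm_berrut_error_ge:
  "17 * 4 ^ (m + 2) / (2 * level m) \<le> sup_norm (\<lambda>x. berrut (level m) (bumps UNIV) x - bumps UNIV x)"
proof -
  define n where "n = level m"
  define x where "x = probe m"
  define g where "g x = berrut n (bumps UNIV) x - bumps UNIV x" for x
  have n: "0 < n" by (simp add: n_def level_pos)
  have "1 * (8 * bump_K m + 1) \<le> n"
    unfolding n_def level_def by (intro mult_le_mono1) simp
  then have r: "4 * bump_K m < n" by simp
  note mid = berrut_at_midpoint[OF n r probe_midpoint[of m, folded n_def], folded x_def]
  have "17 * 4 ^ (m + 2) / (2 * n) \<le> \<bar>berrut_num n (bumps UNIV) x\<bar> / \<bar>berrut_den n x\<bar>"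
  proof (rule frac_le)
    show "17 * 4 ^ (m + 2) \<le> \<bar>berrut_num n (bumps UNIV) x\<bar>"
      using berrut_num_probe_ge[of m] by (simp add: x_def n_def)
  qed (use mid(2,3) in auto)
  also have "\<dots> = \<bar>g x\<bar>"
    unfolding g_def mid(1) using bumps_probe[of m] by (simp add: x_def n_def abs_divide)
  also have "\<dots> \<le> sup_norm g"
    unfolding sup_norm_def g_def using probe_mem[of m] unfolding x_def
    by (intro cSUP_upper bdd_above_berrut_error[where f = "bumps UNIV", OF n abs_bumps_le_1])
  finally show ?thesis unfolding g_def n_def .
qed

lemma scaled_berrut_error_at_level:
  "1 / 50 \<le> level m / ln (level m) * sup_norm (\<lambda>x. berrut (level m) (bumps UNIV) x - bumps UNIV x)"
proof -
  define n where "n = level m"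
  define T :: real where "T = 4 ^ (m + 2)"
  have T: "1 \<le> T" unfolding T_def by (rule one_le_power) simp
  have "1 * 9 \<le> n"
    unfolding n_def level_def using bump_K_ge_1[of m] by (intro mult_le_mono) auto
  then have n: "2 \<le> real n" by simp
  then have ln: "0 < ln n" "ln n \<le> 400 * T"
    using ln_level_le[of m] by (simp_all add: n_def T_def)
  have "1 / 50 \<le> 17 * T / (2 * (400 * T))"
    using T by simp
  also have "\<dots> \<le> 17 * T / (2 * ln n)"
    using ln T by (intro divide_left_mono) auto
  also have "\<dots> = n / ln n * (17 * T / (2 * n))"
    using n ln by (simp add: field_simps)
  also have "\<dots> \<le> n / ln n * sup_norm (\<lambda>x. berrut n (bumps UNIV) x - bumps UNIV x)"
    using sup_norm_berrut_error_ge[of m] n ln by (intro mult_left_mono) (auto simp: n_def T_def)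
  finally show ?thesis unfolding n_def .
qed

lemma strict_mono_level: "strict_mono level"
proof (rule strict_monoI_Suc)
  fix m
  have "bump_K m \<le> bump_K (Suc m)"
    unfolding bump_K_def bump_exp_def by (simp add: power_increasing)
  have "level m < 2 ^ (Suc m + 1) * (8 * bump_K m + 1)"
    unfolding level_def by simp
  also have "\<dots> \<le> level (Suc m)"
    unfolding level_def using \<open>bump_K m \<le> bump_K (Suc m)\<close> by (intro mult_le_mono2) simp
  finally show "level m < level (Suc m)" .
qed

theorem mainTheorem1:
  shows "\<exists>f :: real \<Rightarrow> real. (\<exists>\<kappa>. \<forall>x\<in>{-1..1}. \<forall>y\<in>{-1..1}. \<bar>f x - f y\<bar> \<le> \<kappa> * \<bar>x - y\<bar>) \<and>
     limsup (\<lambda>n. ereal (real n / ln (real n) * sup_norm (\<lambda>x. berrut n f x - f x))) > 0"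
proof (intro exI conjI)
  show "\<forall>x\<in>{-1..1}. \<forall>y\<in>{-1..1}. \<bar>bumps UNIV x - bumps UNIV y\<bar> \<le> 1 * \<bar>x - y\<bar>"
    using bumps_lipschitz by simp
  define X where
    "X n = ereal (real n / ln (real n) * sup_norm (\<lambda>x. berrut n (bumps UNIV) x - bumps UNIV x))" for n
  have "ereal (1 / 50) \<le> limsup (X \<circ> level)"
  proof (rule le_Limsup)
    show "\<forall>\<^sub>F m in sequentially. ereal (1 / 50) \<le> (X \<circ> level) m"
      unfolding X_def comp_def ereal_less_eq
      by (intro always_eventually allI scaled_berrut_error_at_level)
  qed simp
  also have "\<dots> \<le> limsup X"
    by (rule limsup_subseq_mono[OF strict_mono_level])
  finally show "0 < limsup X"
    by (rule less_le_trans[rotated]) simp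
qed

end
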